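(* Let $J\in\mathcal{D}(X)$ and, for each $x\in X$, let $\bar U(x)\subset U(x)$ be such that $(\bar TJ)(x)\le J(x)$ for all $x\in X$, where $(\bar TJ')(x)=\inf_{u\in\bar U(x)}\{g(x,u)+J'(f(x,u))\}$ for $J'\in\mathcal{E}^+(X)$. Then $\bar T^\ell J\in\mathcal{D}(X)$ for every positive integer $\ell$, where $\bar T^\ell$ denotes the $\ell$-fold composition of $\bar T$.
   Context: Setting: $X$ (state space) and $U$ (control space) are sets; for each $x\in X$, $U(x)\subset U$ is nonempty; $f:X\times U\to X$; the stage cost $g$ satisfies $0\le g(x,u)\le\infty$ for all $x\in X$, $u\in U(x)$. $\mathcal{E}^+(X)$ denotes the set of all functions $J:X\to[0,\infty]$. The Bellman operator is $(TJ)(x)=\inf_{u\in U(x)}\{g(x,u)+J(f(x,u))\}$. The region of decreasing is $\mathcal{D}(X)=\{J\in\mathcal{E}^+(X): (TJ)(x)\le J(x)\ \forall x\in X\}$. Standing assumption: for every $J\in\mathcal{E}^+(X)$ and every $x\in X$, the infimum defining $(TJ)(x)$ is attained. *)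

theory Defs
  imports Complex_Main "HOL-Library.Extended_Nonnegative_Real"
begin

text \<open>Functions J : X \<Rightarrow> [0,\<infinity>] are modelled as 'x \<Rightarrow> ennreal (the set E+(X) is the whole type).
  Bellman operator associated with a control-constraint map V (V = U gives T, V = Ubar gives Tbar).\<close>
definition bellman :: "('x \<Rightarrow> 'u \<Rightarrow> ennreal) \<Rightarrow> ('x \<Rightarrow> 'u \<Rightarrow> 'x) \<Rightarrow> ('x \<Rightarrow> 'u set)
    \<Rightarrow> ('x \<Rightarrow> ennreal) \<Rightarrow> 'x \<Rightarrow> ennreal" where
  "bellman g f V J x = (INF u\<in>V x. g x u + J (f x u))"

definition region_of_decreasing :: "('x \<Rightarrow> 'u \<Rightarrow> ennreal) \<Rightarrow> ('x \<Rightarrow> 'u \<Rightarrow> 'x) \<Rightarrow> ('x \<Rightarrow> 'u set)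
    \<Rightarrow> ('x \<Rightarrow> ennreal) set" where
  "region_of_decreasing g f U = {J. \<forall>x. bellman g f U J x \<le> J x}"

end

theory Submission
  imports Defs
begin

(* Tbar is monotone and Tbar J \<le> J, so the iterates decrease: Tbar^(l+1) J \<le> Tbar^l J.
   Since Ubar x \<subseteq> U x, also T \<le> Tbar, hence T (Tbar^l J) \<le> Tbar^(l+1) J \<le> Tbar^l J. *)

lemma funpow_Suc_le_funpow:
  fixes F :: "'a::order \<Rightarrow> 'a"
  assumes "mono F" and "F a \<le> a"
  shows "(F ^^ Suc n) a \<le> (F ^^ n) a"
  using funpow_mono[OF assms] by (simp add: funpow_swap1)

lemma mono_bellman: "mono (bellman g f V)"
proof (intro monoI le_funI)
  fix J J' :: "'a \<Rightarrow> ennreal" and x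
  assume "J \<le> J'"
  then show "bellman g f V J x \<le> bellman g f V J' x"
    unfolding bellman_def by (intro INF_mono) (auto intro: add_left_mono le_funD)
qed

lemma bellman_antimono_controls:
  assumes "\<And>x. V x \<subseteq> W x"
  shows "bellman g f W J \<le> bellman g f V J"
  unfolding bellman_def using assms by (intro le_funI INF_superset_mono) auto

lemma region_of_decreasing_iff: "J \<in> region_of_decreasing g f U \<longleftrightarrow> bellman g f U J \<le> J"
  unfolding region_of_decreasing_def le_fun_def by simp

theorem corollary4:
  fixes g :: "'x \<Rightarrow> 'u \<Rightarrow> ennreal" and f :: "'x \<Rightarrow> 'u \<Rightarrow> 'x"
    and U Ubar :: "'x \<Rightarrow> 'u set" and J :: "'x \<Rightarrow> ennreal" and l :: nat
  assumes U_nonempty: "\<And>x. U x \<noteq> {}"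
    and attained: "\<And>J' x. \<exists>u\<in>U x. bellman g f U J' x = g x u + J' (f x u)"
    and J_dec: "J \<in> region_of_decreasing g f U"
    and Ubar_sub: "\<And>x. Ubar x \<subseteq> U x"
    and Ubar_dec: "\<And>x. bellman g f Ubar J x \<le> J x"
    and l_pos: "l \<ge> 1"
  shows "(bellman g f Ubar ^^ l) J \<in> region_of_decreasing g f U"
proof -
  let ?Tbar = "bellman g f Ubar"
  have "bellman g f U ((?Tbar ^^ l) J) \<le> ?Tbar ((?Tbar ^^ l) J)"
    using Ubar_sub by (rule bellman_antimono_controls)
  also have "\<dots> \<le> (?Tbar ^^ l) J"
    using funpow_Suc_le_funpow[OF mono_bellman, of g f Ubar J l] Ubar_dec
    by (simp add: le_fun_def)
  finally show ?thesis
    by (simp add: region_of_decreasing_iff)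
qed

end
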